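(* Let $\kappa\ge1$, $n\ge1$ be integers and $0<\epsilon<1$. Let $\bar q\in\mathbb{R}^{2^\kappa}$ be the uniform vector fraction code: $\bar q_0=0$ and $\bar q_i=\frac{1}{2^\kappa-1}$ for $1\le i\le 2^\kappa-1$. Then $\bar q$ is a local minimizer of $q\mapsto l(n,\epsilon,q)$ on $\mathcal{C}=\{q\in\mathbb{R}^{2^\kappa}: q_i\ge0\ \forall i,\ \sum_i q_i=1\}$.
   Context: $W=\mathbb{F}_2^\kappa$; $\nu(i)\in W$ is the binary expansion of $i\in\{0,\dots,2^\kappa-1\}$; vectors $q\in\mathbb{R}^{2^\kappa}$ are indexed $q_0,\dots,q_{2^\kappa-1}$. For a subspace $S\subseteq W$, $\zeta(S,q)=\sum_{i:\nu(i)\in S}q_i$; $\Xi(W,d)$ is the set of $d$-dimensional subspaces of $W$. For real $q$, the (continuous) expected equivocation loss is $l(n,\epsilon,q)=n(1-\epsilon)-\kappa+\sum_{\delta=1}^{\kappa}K_\delta\sum_{S\in\Xi(W,\kappa-\delta)}\epsilon^{n(1-\zeta(S,q))}$, with $K_\delta=\prod_{i=1}^{\delta-1}(1-2^i)$. (When $q_i$ is the fraction of columns of a $\kappa\times n$ generator matrix equal to $\nu(i)$, this is the expected equivocation loss of the coset code over a binary erasure channel with erasure probability $\epsilon$.) A local minimizer of $f$ on a set $\mathcal{C}$ is a point $q\in\mathcal{C}$ with $f(q)\le f(q')$ for all $q'\in\mathcal{C}$ in some neighborhood of $q$. *)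

theory Defs
  imports Complex_Main
begin

text \<open>We identify \<open>W = F_2^\<kappa>\<close> with \<open>{..<2^\<kappa>}\<close> via the binary expansion \<open>\<nu>\<close>;
  vector addition in \<open>W\<close> then corresponds to bitwise xor on naturals.
  A linear subspace of \<open>W\<close> (over \<open>F_2\<close>) is a set containing 0 and closed under
  addition; its dimension is \<open>d\<close> iff it has \<open>2^d\<close> elements.\<close>

definition is_subspace :: "nat \<Rightarrow> nat set \<Rightarrow> bool" where
  "is_subspace \<kappa> S \<longleftrightarrow> S \<subseteq> {..<2^\<kappa>} \<and> 0 \<in> S \<and> (\<forall>x\<in>S. \<forall>y\<in>S. xor x y \<in> S)"

definition Xi :: "nat \<Rightarrow> nat \<Rightarrow> nat set set" where
  "Xi \<kappa> d = {S. is_subspace \<kappa> S \<and> card S = 2^d}"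

definition zeta :: "nat set \<Rightarrow> (nat \<Rightarrow> real) \<Rightarrow> real" where
  "zeta S q = (\<Sum>i\<in>S. q i)"

definition Kc :: "nat \<Rightarrow> real" where
  "Kc \<delta> = (\<Prod>i=1..<\<delta>. 1 - 2^i)"

definition eq_loss :: "nat \<Rightarrow> nat \<Rightarrow> real \<Rightarrow> (nat \<Rightarrow> real) \<Rightarrow> real" where
  "eq_loss \<kappa> n \<epsilon> q = real n * (1 - \<epsilon>) - real \<kappa>
     + (\<Sum>\<delta>=1..\<kappa>. Kc \<delta> * (\<Sum>S\<in>Xi \<kappa> (\<kappa> - \<delta>). \<epsilon> powr (real n * (1 - zeta S q))))"

text \<open>Probability simplex on the coordinates \<open>0..2^\<kappa>-1\<close> (other coordinates irrelevant).\<close>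
definition simplexC :: "nat \<Rightarrow> (nat \<Rightarrow> real) set" where
  "simplexC \<kappa> = {q. (\<forall>i<2^\<kappa>. q i \<ge> 0) \<and> (\<Sum>i<2^\<kappa>. q i) = 1}"

definition local_minimizer_on :: "nat \<Rightarrow> ((nat \<Rightarrow> real) \<Rightarrow> real) \<Rightarrow> (nat \<Rightarrow> real) set \<Rightarrow> (nat \<Rightarrow> real) \<Rightarrow> bool" where
  "local_minimizer_on \<kappa> f C q \<longleftrightarrow> q \<in> C \<and>
     (\<exists>e>0. \<forall>q'\<in>C. (\<forall>i<2^\<kappa>. \<bar>q' i - q i\<bar> < e) \<longrightarrow> f q \<le> f q')"

definition qbar :: "nat \<Rightarrow> nat \<Rightarrow> real" where
  "qbar \<kappa> i = (if i = 0 then 0 else 1 / (2^\<kappa> - 1))"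

end

theory Submission
  imports Defs
begin

text \<open>
  Write \<open>\<epsilon> powr (n q\<^sub>i) = x (1 + u\<^sub>i)\<close> with \<open>x = \<epsilon> powr (n / (2^\<kappa> - 1))\<close>, so that up to a
  constant the loss is \<open>\<Sum>\<^sub>\<delta> K\<^sub>\<delta> \<Sum>\<^sub>S \<Prod>\<^bsub>i \<notin> S, i \<noteq> 0\<^esub> x (1 + u\<^sub>i)\<close>. The key combinatorial fact is
  that the \<open>K\<close>-weighted number of subspaces containing a set \<open>Z\<close> is \<open>\<kappa> - dim span Z\<close>. Hence,
  expanding the products, the coefficient \<open>c1\<close> of each \<open>u\<^sub>i\<close> and \<open>c2\<close> of each \<open>u\<^sub>i u\<^sub>j\<close> (\<open>i \<noteq> j\<close>) does
  not depend on \<open>i, j\<close>; averaging over random subsets shows \<open>c1 > 0\<close> and \<open>c1 > c2\<close>. So the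
  increment of the loss is \<open>c1 s + c2/2 (s\<^sup>2 - Q) + O(max |u| Q)\<close> with \<open>s = \<Sum> u\<^sub>i\<close>,
  \<open>Q = \<Sum> u\<^sub>i\<^sup>2\<close>. On the simplex \<open>\<Sum> ln (1 + u\<^sub>i) = -n q\<^sub>0 ln \<epsilon> \<ge> 0\<close>, whence
  \<open>s \<ge> (1/2 - o(1)) Q\<close>, and the increment is at least \<open>((c1 - c2)/2 - o(1)) Q \<ge> 0\<close>.
\<close>

subsection \<open>Subspaces of \<open>F\<^sub>2\<^sup>k\<close> in the binary encoding\<close>

lemma less_power2_iff_drop_bit: "(x::nat) < 2^m \<longleftrightarrow> drop_bit m x = 0"
  by (simp add: drop_bit_eq_div div_eq_0_iff)

lemma xor_less_power2: "(x::nat) < 2^m \<Longrightarrow> y < 2^m \<Longrightarrow> xor x y < 2^m"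
  by (simp add: less_power2_iff_drop_bit)

lemma drop_bit_upper_half: "(x::nat) < 2^Suc c \<Longrightarrow> \<not> x < 2^c \<Longrightarrow> drop_bit c x = 1"
  by (simp add: drop_bit_eq_div) (metis div_eq_0_iff div_less_iff_less_mult less_2_cases_iff
      less_numeral_extra(3) mult.commute power_Suc zero_less_numeral zero_less_power)

lemma xor_upper_upper_less:
  "(x::nat) < 2^Suc c \<Longrightarrow> \<not> x < 2^c \<Longrightarrow> y < 2^Suc c \<Longrightarrow> \<not> y < 2^c \<Longrightarrow> xor x y < 2^c"
  by (simp add: less_power2_iff_drop_bit drop_bit_upper_half)

lemma xor_upper_lower_not_less:
  "(x::nat) < 2^Suc c \<Longrightarrow> \<not> x < 2^c \<Longrightarrow> y < 2^c \<Longrightarrow> \<not> xor x y < 2^c"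
  using drop_bit_upper_half[of x c] by (simp add: less_power2_iff_drop_bit)

lemma xor_cancel_left [simp]: "xor (u::nat) (xor u y) = y"
  by (simp add: xor.assoc[symmetric])

lemma xor_eq_0_iff: "xor (x::nat) y = 0 \<longleftrightarrow> x = y"
  by (metis xor_cancel_left xor.right_neutral xor_self_eq)

lemma xor_eq_self_iff: "xor (x::nat) y = x \<longleftrightarrow> y = 0"
  by (metis xor_cancel_left xor_self_eq xor.right_neutral)

lemma inj_on_xor: "inj_on (xor (u::nat)) A"
  by (rule inj_onI) (metis xor_cancel_left)

lemma is_subspace_finite: "is_subspace c S \<Longrightarrow> finite S"
  unfolding is_subspace_def using finite_subset by blast

lemma is_subspace_zero: "is_subspace c S \<Longrightarrow> 0 \<in> S"
  unfolding is_subspace_def by blast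

lemma is_subspace_xor: "is_subspace c S \<Longrightarrow> x \<in> S \<Longrightarrow> y \<in> S \<Longrightarrow> xor x y \<in> S"
  unfolding is_subspace_def by blast

lemma is_subspace_less: "is_subspace c S \<Longrightarrow> x \<in> S \<Longrightarrow> x < 2^c"
  unfolding is_subspace_def by blast

lemma is_subspace_0: "is_subspace 0 S \<longleftrightarrow> S = {0}"
  unfolding is_subspace_def by auto

lemma is_subspace_full: "is_subspace k {..<2^k}"
  unfolding is_subspace_def by (auto intro: xor_less_power2)

lemma is_subspace_lower_half: "is_subspace (Suc c) S \<Longrightarrow> is_subspace c (S \<inter> {..<2^c})"
  unfolding is_subspace_def by (auto intro: xor_less_power2)

lemma is_subspace_Suc: "is_subspace c S \<Longrightarrow> is_subspace (Suc c) S"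
  unfolding is_subspace_def by auto

lemma is_subspace_of_Suc: "is_subspace (Suc c) S \<Longrightarrow> S \<subseteq> {..<2^c} \<Longrightarrow> is_subspace c S"
  unfolding is_subspace_def by auto

lemma card_is_subspace_le: "is_subspace c S \<Longrightarrow> card S \<le> 2^c"
  unfolding is_subspace_def by (metis card_lessThan card_mono finite_lessThan)

lemma finite_subspaces: "finite {S. is_subspace c S \<and> P S}"
  by (rule finite_subset[of _ "Pow {..<2^c}"]) (auto simp: is_subspace_def)

lemma finite_Xi: "finite (Xi k d)"
  using finite_subspaces[of k] by (simp add: Xi_def)

text \<open>In the binary encoding, \<open>{..<2^c}\<close> is the hyperplane of \<open>F_2^(c+1)\<close> on which the top
  coordinate vanishes; the induction on the dimension splits subspaces along it.\<close>

lemma upper_half_eq_xor_image: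
  assumes S: "is_subspace (Suc c) S" and u: "u \<in> S" "\<not> u < 2^c"
  shows "S - {..<2^c} = xor u ` (S \<inter> {..<2^c})"
proof
  show "xor u ` (S \<inter> {..<2^c}) \<subseteq> S - {..<2^c}"
    using S u xor_upper_lower_not_less[of u c] is_subspace_less[OF S] is_subspace_xor[OF S] by auto
  show "S - {..<2^c} \<subseteq> xor u ` (S \<inter> {..<2^c})"
  proof
    fix y assume y: "y \<in> S - {..<2^c}"
    then have "xor u y \<in> S \<inter> {..<2^c}"
      using S u xor_upper_upper_less[of u c y] is_subspace_less[OF S] is_subspace_xor[OF S] by auto
    then show "y \<in> xor u ` (S \<inter> {..<2^c})" by (metis image_eqI xor_cancel_left)
  qed
qed

lemma card_subspace_eq_double_lower_half:
  assumes S: "is_subspace (Suc c) S" and u: "u \<in> S" "\<not> u < 2^c"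
  shows "card S = 2 * card (S \<inter> {..<2^c})"
proof -
  have "card S = card (S \<inter> {..<2^c}) + card (S - {..<2^c})"
    using is_subspace_finite[OF S] by (metis Int_Diff_Un Int_Diff_disjoint card_Un_disjoint finite_Diff finite_Int)
  also have "card (S - {..<2^c}) = card (S \<inter> {..<2^c})"
    by (simp add: upper_half_eq_xor_image[OF assms] card_image[OF inj_on_xor])
  finally show ?thesis by simp
qed

lemma is_subspace_extension:
  assumes L: "is_subspace c L" and u: "u < 2^Suc c" "\<not> u < 2^c"
  shows "is_subspace (Suc c) (L \<union> xor u ` L)" and "(L \<union> xor u ` L) \<inter> {..<2^c} = L"
proof -
  have L_less: "\<And>y. y \<in> L \<Longrightarrow> y < 2^c" using is_subspace_less[OF L] .
  show "(L \<union> xor u ` L) \<inter> {..<2^c} = L"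
    using xor_upper_lower_not_less[OF u] L_less by auto
  have closed: "xor y z \<in> L \<union> xor u ` L" if "y \<in> L \<union> xor u ` L" "z \<in> L \<union> xor u ` L" for y z
  proof -
    have "xor a b \<in> L" "xor (xor u a) (xor u b) = xor a b"
      "xor a (xor u b) = xor u (xor a b)" "xor (xor u a) b = xor u (xor a b)"
      if "a \<in> L" "b \<in> L" for a b
      using is_subspace_xor[OF L that] by (simp_all add: xor.left_commute xor.assoc)
    then show ?thesis using that by auto
  qed
  have "y < 2^Suc c" if "y \<in> L \<union> xor u ` L" for y
  proof -
    have "y < 2^Suc c" if "y \<in> L" for y
      using L_less[OF that] by simp
    then show ?thesis using that u xor_less_power2[of u "Suc c"] by auto
  qed
  then show "is_subspace (Suc c) (L \<union> xor u ` L)"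
    unfolding is_subspace_def using is_subspace_zero[OF L] closed by blast
qed

lemma card_subspace_power2: "is_subspace c S \<Longrightarrow> \<exists>d\<le>c. card S = 2^d"
proof (induction c arbitrary: S)
  case 0
  then show ?case by (simp add: is_subspace_0)
next
  case (Suc c)
  obtain d where d: "d \<le> c" "card (S \<inter> {..<2^c}) = 2^d"
    using Suc.IH[OF is_subspace_lower_half[OF Suc.prems]] by blast
  show ?case
  proof (cases "S \<subseteq> {..<2^c}")
    case True
    then show ?thesis using d by (metis Int_absorb2 le_Suc_eq)
  next
    case False
    then obtain u where "u \<in> S" "\<not> u < 2^c" by auto
    then have "card S = 2^Suc d" using card_subspace_eq_double_lower_half[OF Suc.prems] d by simp
    then show ?thesis using d by auto
  qed
qed

subsection \<open>Counting subspaces\<close>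

definition extensions :: "nat \<Rightarrow> nat set \<Rightarrow> nat set set" where
  "extensions c L = {S. is_subspace (Suc c) S \<and> S \<inter> {..<2^c} = L \<and> \<not> S \<subseteq> {..<2^c}}"

lemma finite_extensions: "finite (extensions c L)"
  using finite_subspaces[of "Suc c"] by (simp add: extensions_def)

lemma extension_upper_half:
  assumes "S \<in> extensions c L" "v \<in> S" "\<not> v < 2^c"
  shows "S - {..<2^c} = xor v ` L"
  using assms upper_half_eq_xor_image[of c S v] by (auto simp: extensions_def)

lemma extension_of_point:
  assumes L: "is_subspace c L" and v: "v \<in> {2^c..<2^Suc c}"
  shows "L \<union> xor v ` L \<in> extensions c L" and "v \<in> L \<union> xor v ` L"
proof -
  show v_in: "v \<in> L \<union> xor v ` L"
    using is_subspace_zero[OF L] by (metis UnI2 image_eqI xor.right_neutral)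
  have "v < 2^Suc c" "\<not> v < 2^c" using v by auto
  then show "L \<union> xor v ` L \<in> extensions c L"
    using is_subspace_extension[OF L] v_in by (auto simp: extensions_def)
qed

text \<open>The upper halves \<open>S - {..<2^c}\<close> of the extensions partition \<open>{2^c..<2^Suc c}\<close>
  into translates of \<open>L\<close>.\<close>

lemma card_extensions:
  assumes L: "is_subspace c L" and card_L: "card L * 2^\<delta> = 2^c"
  shows "card (extensions c L) = 2^\<delta>"
proof -
  let ?H = "{..<(2::nat)^c}"
  define blocks where "blocks = (\<lambda>S. S - ?H) ` extensions c L"
  have block_card: "card X = card L" if "X \<in> blocks" for X
  proof -
    from that obtain S v where "S \<in> extensions c L" "X = S - ?H" "v \<in> S - ?H"
      unfolding blocks_def extensions_def by blast
    then show ?thesis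
      using extension_upper_half card_image[OF inj_on_xor] by auto
  qed
  have blocks_cover: "\<Union>blocks = {2^c..<2^Suc c}"
  proof
    show "\<Union>blocks \<subseteq> {2^c..<2^Suc c}"
      using is_subspace_less by (fastforce simp: blocks_def extensions_def)
    show "{2^c..<2^Suc c} \<subseteq> \<Union>blocks"
    proof
      fix v :: nat assume "v \<in> {2^c..<2^Suc c}"
      then have "L \<union> xor v ` L - ?H \<in> blocks" "v \<in> L \<union> xor v ` L - ?H"
        using extension_of_point[OF L] unfolding blocks_def by auto
      then show "v \<in> \<Union>blocks" by blast
    qed
  qed
  have blocks_disjoint: "X \<inter> Y = {}" if "X \<in> blocks" "Y \<in> blocks" "X \<noteq> Y" for X Y
  proof -
    from that obtain S T where "S \<in> extensions c L" "T \<in> extensions c L" "X = S - ?H" "Y = T - ?H"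
      unfolding blocks_def by blast
    then show ?thesis
      using extension_upper_half \<open>X \<noteq> Y\<close> by blast
  qed
  have "card L * card blocks = 2^c"
    using card_partition[OF _ _ block_card blocks_disjoint] blocks_cover
    by (simp add: blocks_def finite_extensions)
  moreover have "inj_on (\<lambda>S. S - ?H) (extensions c L)"
  proof (rule inj_onI)
    fix S1 S2 assume "S1 \<in> extensions c L" "S2 \<in> extensions c L" "S1 - ?H = S2 - ?H"
    then have "S1 \<inter> ?H = S2 \<inter> ?H" by (simp add: extensions_def)
    then show "S1 = S2" using \<open>S1 - ?H = S2 - ?H\<close> by (metis Int_Diff_Un)
  qed
  then have "card blocks = card (extensions c L)" by (simp add: blocks_def card_image)
  moreover have "card L > 0"
    using is_subspace_finite[OF L] is_subspace_zero[OF L] by (auto simp: card_gt_0_iff)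
  ultimately show ?thesis using card_L by (metis mult_left_cancel less_not_refl2)
qed

definition supspaces :: "nat \<Rightarrow> nat set \<Rightarrow> nat \<Rightarrow> nat set set" where
  "supspaces c U \<delta> = {S. is_subspace c S \<and> U \<subseteq> S \<and> card S * 2^\<delta> = 2^c}"

lemma finite_supspaces: "finite (supspaces c U \<delta>)"
  using finite_subspaces[of c] by (simp add: supspaces_def)

lemma supspaces_codim_0:
  assumes "is_subspace c U"
  shows "supspaces c U 0 = {{..<2^c}}"
proof -
  have "S = {..<2^c}" if "is_subspace c S" "card S = 2^c" for S
    using that by (metis card_lessThan card_subset_eq finite_lessThan is_subspace_def)
  then show ?thesis
    using assms is_subspace_full[of c] by (auto simp: supspaces_def is_subspace_def)
qed

lemma supspaces_Suc_lower:
  "{S \<in> supspaces (Suc c) U (Suc \<delta>). S \<subseteq> {..<2^c}} = supspaces c U \<delta>"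
  by (auto simp: supspaces_def intro: is_subspace_of_Suc is_subspace_Suc dest: is_subspace_less)

lemma supspaces_Suc_upper:
  assumes U: "U \<subseteq> {..<2^c}"
  shows "{S \<in> supspaces (Suc c) U \<delta>. \<not> S \<subseteq> {..<2^c}} = (\<Union>L\<in>supspaces c U \<delta>. extensions c L)"
proof -
  have card_iff: "card S * 2^\<delta> = 2^Suc c \<longleftrightarrow> card (S \<inter> {..<2^c}) * 2^\<delta> = 2^c"
    if "is_subspace (Suc c) S" "\<not> S \<subseteq> {..<2^c}" for S
    using that card_subspace_eq_double_lower_half[of c S] by auto
  show ?thesis
  proof (intro set_eqI iffI)
    fix S assume "S \<in> {S \<in> supspaces (Suc c) U \<delta>. \<not> S \<subseteq> {..<2^c}}"
    then have "S \<inter> {..<2^c} \<in> supspaces c U \<delta>" "S \<in> extensions c (S \<inter> {..<2^c})"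
      using U card_iff[of S] is_subspace_lower_half[of c S]
      by (auto simp: supspaces_def extensions_def)
    then show "S \<in> (\<Union>L\<in>supspaces c U \<delta>. extensions c L)" by blast
  next
    fix S assume "S \<in> (\<Union>L\<in>supspaces c U \<delta>. extensions c L)"
    then obtain L where "L \<in> supspaces c U \<delta>" "S \<in> extensions c L" by blast
    then show "S \<in> {S \<in> supspaces (Suc c) U \<delta>. \<not> S \<subseteq> {..<2^c}}"
      using card_iff[of S] by (auto simp: supspaces_def extensions_def)
  qed
qed

lemma card_supspaces_Suc_lower:
  assumes U: "is_subspace c U"
  shows "card (supspaces (Suc c) U (Suc \<delta>))
    = card (supspaces c U \<delta>) + 2^Suc \<delta> * card (supspaces c U (Suc \<delta>))"
proof -
  let ?F = "supspaces (Suc c) U (Suc \<delta>)" and ?H = "{..<(2::nat)^c}"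
  have U_low: "U \<subseteq> ?H" using is_subspace_less[OF U] by auto
  have "?F = {S \<in> ?F. S \<subseteq> ?H} \<union> {S \<in> ?F. \<not> S \<subseteq> ?H}" by blast
  then have "card ?F = card {S \<in> ?F. S \<subseteq> ?H} + card {S \<in> ?F. \<not> S \<subseteq> ?H}"
    by (metis (no_types, lifting) card_Un_disjoint disjoint_iff finite_Un finite_supspaces mem_Collect_eq)
  also have "card {S \<in> ?F. \<not> S \<subseteq> ?H} = (\<Sum>L\<in>supspaces c U (Suc \<delta>). card (extensions c L))"
    unfolding supspaces_Suc_upper[OF U_low]
    by (rule card_UN_disjoint) (auto simp: finite_supspaces finite_extensions, auto simp: extensions_def)
  also have "\<dots> = (\<Sum>L\<in>supspaces c U (Suc \<delta>). 2^Suc \<delta>)"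
    by (rule sum.cong) (auto simp: supspaces_def card_extensions simp del: power_Suc)
  finally show ?thesis by (simp add: supspaces_Suc_lower)
qed

lemma subspace_eq_of_lower_half:
  assumes "is_subspace (Suc c) S" "is_subspace (Suc c) T" "u \<in> S" "u \<in> T" "\<not> u < 2^c"
    and "S \<inter> {..<2^c} = T \<inter> {..<2^c}"
  shows "S = T"
  using assms upper_half_eq_xor_image[of c S u] upper_half_eq_xor_image[of c T u]
  by (metis Int_Diff_Un)

lemma card_supspaces_Suc_upper:
  assumes U: "is_subspace (Suc c) U" and u: "u \<in> U" "\<not> u < 2^c"
  shows "card (supspaces (Suc c) U \<delta>) = card (supspaces c (U \<inter> {..<2^c}) \<delta>)"
proof (rule bij_betw_same_card[of "\<lambda>S. S \<inter> {..<2^c}"], rule bij_betw_imageI)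
  let ?H = "{..<(2::nat)^c}"
  show "inj_on (\<lambda>S. S \<inter> ?H) (supspaces (Suc c) U \<delta>)"
  proof (rule inj_onI)
    fix S T assume "S \<in> supspaces (Suc c) U \<delta>" "T \<in> supspaces (Suc c) U \<delta>" "S \<inter> ?H = T \<inter> ?H"
    then show "S = T"
      by (intro subspace_eq_of_lower_half[of c S T u]) (use u in \<open>auto simp: supspaces_def\<close>)
  qed
  have "S \<inter> ?H \<in> supspaces c (U \<inter> ?H) \<delta>" if "S \<in> supspaces (Suc c) U \<delta>" for S
    using that u card_subspace_eq_double_lower_half[of c S u] is_subspace_lower_half[of c S]
    by (auto simp: supspaces_def)
  moreover have "L \<in> (\<lambda>S. S \<inter> ?H) ` supspaces (Suc c) U \<delta>" if L: "L \<in> supspaces c (U \<inter> ?H) \<delta>" for L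
  proof -
    have L_sub: "is_subspace c L" using L by (simp add: supspaces_def)
    have u_less: "u < 2^Suc c" using is_subspace_less[OF U u(1)] .
    define S where "S = L \<union> xor u ` L"
    have S: "is_subspace (Suc c) S" "S \<inter> ?H = L"
      using is_subspace_extension[OF L_sub u_less u(2)] by (simp_all add: S_def)
    have u_S: "u \<in> S"
      using is_subspace_zero[OF L_sub] unfolding S_def by (metis UnI2 image_eqI xor.right_neutral)
    have "y \<in> S" if "y \<in> U" for y
    proof (cases "y < 2^c")
      case True
      then show ?thesis using that L by (auto simp: supspaces_def S_def)
    next
      case False
      then have "xor u y \<in> L"
        using L xor_upper_upper_less[OF u_less u(2) is_subspace_less[OF U that]]
          is_subspace_xor[OF U u(1) that] by (auto simp: supspaces_def)
      then show ?thesis unfolding S_def by (metis UnI2 image_eqI xor_cancel_left)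
    qed
    moreover have "card S = 2 * card L"
      using card_subspace_eq_double_lower_half[OF S(1) u_S u(2)] S(2) by simp
    ultimately have "S \<in> supspaces (Suc c) U \<delta>"
      using S L by (auto simp: supspaces_def)
    then show ?thesis using S(2) by force
  qed
  ultimately show "(\<lambda>S. S \<inter> ?H) ` supspaces (Suc c) U \<delta> = supspaces c (U \<inter> ?H) \<delta>" by blast
qed

text \<open>The Gaussian binomial coefficient \<open>[m, d]\<^sub>2\<close>, defined by the \<open>q\<close>-Pascal rule; by
  \<open>card_supspaces\<close> below it counts the subspaces of codimension \<open>d\<close> containing a fixed
  subspace of codimension \<open>m\<close>.\<close>

fun gbinom2 :: "nat \<Rightarrow> nat \<Rightarrow> nat" where
  "gbinom2 m 0 = 1"
| "gbinom2 0 (Suc d) = 0"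
| "gbinom2 (Suc m) (Suc d) = gbinom2 m d + 2^Suc d * gbinom2 m (Suc d)"

lemma gbinom2_eq_0: "m < d \<Longrightarrow> gbinom2 m d = 0"
proof (induction m arbitrary: d)
  case 0 then show ?case by (cases d) auto
next
  case (Suc m) then show ?case by (cases d) auto
qed

theorem card_supspaces:
  "is_subspace c U \<Longrightarrow> card U = 2^d \<Longrightarrow> card (supspaces c U \<delta>) = gbinom2 (c - d) \<delta>"
proof (induction c arbitrary: U d \<delta>)
  case 0
  then have U: "U = {0}" by (simp add: is_subspace_0)
  with 0 have "(2::nat)^d = 1" by simp
  then have "d = 0" by (cases d) auto
  moreover have "supspaces 0 {0} \<delta> = (if \<delta> = 0 then {{0}} else {})"
    by (auto simp: supspaces_def is_subspace_0)
  ultimately show ?case using U by (cases \<delta>) auto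
next
  case (Suc c)
  show ?case
  proof (cases "U \<subseteq> {..<2^c}")
    case True
    with Suc.prems(1) have U: "is_subspace c U" by (rule is_subspace_of_Suc)
    then have "d \<le> c" using card_is_subspace_le[OF U] Suc.prems(2) by simp
    then show ?thesis
      using Suc.IH[OF U Suc.prems(2)] card_supspaces_Suc_lower[OF U] supspaces_codim_0[OF Suc.prems(1)]
      by (cases \<delta>) (simp_all add: Suc_diff_le)
  next
    case False
    then obtain u where u: "u \<in> U" "\<not> u < 2^c" by auto
    have card_U: "card U = 2 * card (U \<inter> {..<2^c})"
      using card_subspace_eq_double_lower_half[OF Suc.prems(1) u] .
    then obtain d' where "d = Suc d'"
      using Suc.prems(2) by (cases d) auto
    then show ?thesis
      using Suc.IH[OF is_subspace_lower_half[OF Suc.prems(1)]] card_U Suc.prems(2)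
        card_supspaces_Suc_upper[OF Suc.prems(1) u] by simp
  qed
qed

lemma Kc_1 [simp]: "Kc (Suc 0) = 1"
  by (simp add: Kc_def)

lemma Kc_Suc: "1 \<le> d \<Longrightarrow> Kc (Suc d) = Kc d * (1 - 2^d)"
  unfolding Kc_def by (simp add: prod.atLeastLessThan_Suc)

lemma sum_Kc_gbinom2: "(\<Sum>\<delta>=1..m. Kc \<delta> * real (gbinom2 m \<delta>)) = real m"
proof (induction m)
  case 0 then show ?case by simp
next
  case (Suc m)
  have "(\<Sum>\<delta>=1..Suc m. Kc \<delta> * real (gbinom2 (Suc m) \<delta>))
      = (\<Sum>e=0..m. Kc (Suc e) * real (gbinom2 m e)) + (\<Sum>e=0..m. Kc (Suc e) * 2^Suc e * real (gbinom2 m (Suc e)))"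
    using sum.shift_bounds_cl_Suc_ivl[of "\<lambda>\<delta>. Kc \<delta> * real (gbinom2 (Suc m) \<delta>)" 0 m]
    by (simp add: sum.distrib algebra_simps)
  also have "(\<Sum>e=0..m. Kc (Suc e) * 2^Suc e * real (gbinom2 m (Suc e))) = (\<Sum>e=1..m. Kc e * 2^e * real (gbinom2 m e))"
    using sum.shift_bounds_cl_Suc_ivl[of "\<lambda>e. Kc e * 2^e * real (gbinom2 m e)" 0 m]
    by (simp add: gbinom2_eq_0)
  also have "(\<Sum>e=0..m. Kc (Suc e) * real (gbinom2 m e)) = 1 + (\<Sum>e=1..m. Kc e * (1 - 2^e) * real (gbinom2 m e))"
    by (simp add: sum.atLeast_Suc_atMost Kc_Suc)
  finally show ?case
    using Suc.IH by (simp add: sum.distrib[symmetric] algebra_simps)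
qed

subsection \<open>The \<open>K\<close>-weighted sums over subspaces\<close>

definition xor_span :: "nat \<Rightarrow> nat set \<Rightarrow> nat set" where
  "xor_span k Z = \<Inter>{S. is_subspace k S \<and> Z \<subseteq> S}"

lemma is_subspace_xor_span: "Z \<subseteq> {..<2^k} \<Longrightarrow> is_subspace k (xor_span k Z)"
  using is_subspace_full[of k] unfolding xor_span_def is_subspace_def by blast

lemma xor_span_subset_iff: "is_subspace k S \<Longrightarrow> xor_span k Z \<subseteq> S \<longleftrightarrow> Z \<subseteq> S"
  unfolding xor_span_def by blast

lemma xor_span_mono: "Z \<subseteq> Z' \<Longrightarrow> xor_span k Z \<subseteq> xor_span k Z'"
  unfolding xor_span_def by blast

lemma xor_span_eqI:
  "is_subspace k T \<Longrightarrow> Z \<subseteq> T \<Longrightarrow> (\<And>S. is_subspace k S \<Longrightarrow> Z \<subseteq> S \<Longrightarrow> T \<subseteq> S) \<Longrightarrow> xor_span k Z = T"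
  unfolding xor_span_def by blast

lemma xor_span_empty: "xor_span k {} = {0}"
  by (rule xor_span_eqI) (auto simp: is_subspace_def is_subspace_zero)

lemma xor_span_singleton: "i < 2^k \<Longrightarrow> xor_span k {i} = {0, i}"
  by (rule xor_span_eqI) (auto simp: is_subspace_def is_subspace_zero)

lemma card_xor_span_pair:
  assumes "0 < i" "0 < j" "i \<noteq> j" "i < 2^k" "j < 2^k"
  shows "card (xor_span k {i, j}) = 2^2"
proof -
  have "xor_span k {i, j} = {0, i, j, xor i j}"
  proof (rule xor_span_eqI)
    have "xor i (xor i j) = j" "xor j (xor i j) = i" "xor (xor i j) i = j" "xor (xor i j) j = i"
      "xor j i = xor i j"
      by (simp_all add: xor.commute xor.left_commute)
    then show "is_subspace k {0, i, j, xor i j}"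
      unfolding is_subspace_def using assms by (auto simp: xor_less_power2 simp del: xor_cancel_left)
  qed (auto simp: is_subspace_zero is_subspace_xor)
  moreover have "xor i j \<noteq> 0" "xor i j \<noteq> i" "xor i j \<noteq> j"
    using assms xor_eq_self_iff[of i j] xor_eq_self_iff[of j i] by (auto simp: xor_eq_0_iff xor.commute)
  ultimately show ?thesis using assms by auto
qed

definition Ksum :: "nat \<Rightarrow> (nat set \<Rightarrow> real) \<Rightarrow> real" where
  "Ksum k f = (\<Sum>\<delta>=1..k. Kc \<delta> * (\<Sum>S\<in>Xi k (k - \<delta>). f S))"

lemma Ksum_diff: "Ksum k (\<lambda>S. f S - g S) = Ksum k f - Ksum k g"
  by (simp add: Ksum_def sum_subtractf right_diff_distrib)

lemma Ksum_add: "Ksum k (\<lambda>S. f S + g S) = Ksum k f + Ksum k g"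
  by (simp add: Ksum_def sum.distrib distrib_left)

lemma Ksum_mult_left: "Ksum k (\<lambda>S. c * f S) = c * Ksum k f"
  by (simp add: Ksum_def sum_distrib_left mult.left_commute)

lemma Ksum_divide: "Ksum k (\<lambda>S. f S / c) = Ksum k f / c"
  by (simp add: Ksum_def sum_divide_distrib[symmetric])

lemma Ksum_sum: "Ksum k (\<lambda>S. \<Sum>a\<in>A. f a S) = (\<Sum>a\<in>A. Ksum k (f a))"
  unfolding Ksum_def sum_distrib_left by (subst sum.swap) (simp add: sum.swap[of _ A])

lemma abs_Ksum_le:
  assumes "\<And>S. is_subspace k S \<Longrightarrow> \<bar>f S\<bar> \<le> M"
  shows "\<bar>Ksum k f\<bar> \<le> (\<Sum>\<delta>=1..k. \<bar>Kc \<delta>\<bar> * card (Xi k (k - \<delta>))) * M"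
proof -
  have "\<bar>\<Sum>S\<in>Xi k (k - \<delta>). f S\<bar> \<le> card (Xi k (k - \<delta>)) * M" for \<delta>
    using assms by (intro order.trans[OF sum_abs] sum_bounded_above) (auto simp: Xi_def)
  then have "\<bar>Ksum k f\<bar> \<le> (\<Sum>\<delta>=1..k. \<bar>Kc \<delta>\<bar> * (card (Xi k (k - \<delta>)) * M))"
    unfolding Ksum_def
    by (intro order.trans[OF sum_abs] sum_mono) (simp add: abs_mult mult_left_mono)
  then show ?thesis by (simp add: sum_distrib_right mult.assoc)
qed

lemma card_Xi_containing:
  assumes "Z \<subseteq> {..<2^k}" "\<delta> \<le> k" "card (xor_span k Z) = 2^d"
  shows "card {S \<in> Xi k (k - \<delta>). Z \<subseteq> S} = gbinom2 (k - d) \<delta>"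
proof -
  have "card S = 2^(k - \<delta>) \<longleftrightarrow> card S * 2^\<delta> = 2^k" for S
    using assms(2) by (metis le_add_diff_inverse2 nonzero_mult_div_cancel_right power_add
        power_not_zero zero_neq_numeral)
  then have "{S \<in> Xi k (k - \<delta>). Z \<subseteq> S} = supspaces k (xor_span k Z) \<delta>"
    using xor_span_subset_iff[of k _ Z] by (auto simp: Xi_def supspaces_def)
  then show ?thesis
    using card_supspaces[OF is_subspace_xor_span[OF assms(1)] assms(3)] by simp
qed

lemma Ksum_contains:
  assumes "Z \<subseteq> {..<2^k}" "card (xor_span k Z) = 2^d"
  shows "Ksum k (\<lambda>S. of_bool (Z \<subseteq> S)) = real k - real d"
proof -
  have "d \<le> k"
    using card_is_subspace_le[OF is_subspace_xor_span[OF assms(1)]] assms(2) by simp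
  have "Ksum k (\<lambda>S. of_bool (Z \<subseteq> S)) = (\<Sum>\<delta>=1..k. Kc \<delta> * real (gbinom2 (k - d) \<delta>))"
    unfolding Ksum_def
    by (intro sum.cong refl) (simp add: finite_Xi card_Xi_containing[OF assms(1) _ assms(2)] Int_def)
  also have "\<dots> = (\<Sum>\<delta>=1..k - d. Kc \<delta> * real (gbinom2 (k - d) \<delta>))"
    by (rule sum.mono_neutral_right) (auto simp: gbinom2_eq_0)
  finally show ?thesis using sum_Kc_gbinom2 \<open>d \<le> k\<close> by simp
qed

lemma Ksum_contains_antimono:
  assumes "Z \<subseteq> Z'" "Z' \<subseteq> {..<2^k}"
  shows "Ksum k (\<lambda>S. of_bool (Z' \<subseteq> S)) \<le> Ksum k (\<lambda>S. of_bool (Z \<subseteq> S))"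
proof -
  have Z: "Z \<subseteq> {..<2^k}" using assms by blast
  obtain d d' where d: "card (xor_span k Z) = 2^d" and d': "card (xor_span k Z') = 2^d'"
    using card_subspace_power2 is_subspace_xor_span Z assms(2) by metis
  have "card (xor_span k Z) \<le> card (xor_span k Z')"
    using xor_span_mono[OF assms(1)] is_subspace_finite[OF is_subspace_xor_span[OF assms(2)]]
    by (rule card_mono[rotated])
  then have "d \<le> d'" using d d' by simp
  then show ?thesis using Ksum_contains[OF Z d] Ksum_contains[OF assms(2) d'] by simp
qed

lemma sum_Pow_binomial:
  "finite T \<Longrightarrow> (\<Sum>A\<in>Pow T. (1 - x) ^ card A * x ^ (card T - card A)) = (1::real)"
proof -
  assume T: "finite T"
  have "(\<Prod>t\<in>T. (1 - x) + x) = (\<Sum>A\<in>Pow T. (\<Prod>t\<in>A. 1 - x) * (\<Prod>t\<in>T - A. x))"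
    by (rule prod_add[OF T])
  also have "\<dots> = (\<Sum>A\<in>Pow T. (1 - x) ^ card A * x ^ (card T - card A))"
    by (rule sum.cong) (auto simp: card_Diff_subset finite_subset[OF _ T])
  finally show ?thesis by simp
qed

lemma power_card_Diff_eq_sum_Pow:
  assumes R: "finite R"
  shows "(x::real) ^ card (R - S) = (\<Sum>A\<in>Pow (R \<inter> S). (1 - x) ^ card A * x ^ (card R - card A))"
proof -
  have card_R: "card R = card (R \<inter> S) + card (R - S)"
    using R by (metis Int_Diff_Un Int_Diff_disjoint card_Un_disjoint finite_Diff finite_Int)
  have "x ^ card (R - S) = x ^ card (R - S) * (\<Sum>A\<in>Pow (R \<inter> S). (1 - x) ^ card A * x ^ (card (R \<inter> S) - card A))"
    using sum_Pow_binomial[of "R \<inter> S" x] R by simp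
  also have "\<dots> = (\<Sum>A\<in>Pow (R \<inter> S). (1 - x) ^ card A * x ^ (card R - card A))"
    unfolding sum_distrib_left
  proof (rule sum.cong)
    fix A assume "A \<in> Pow (R \<inter> S)"
    then have "card R - card A = (card (R \<inter> S) - card A) + card (R - S)"
      using R card_R card_mono[of "R \<inter> S" A] by simp
    then show "x ^ card (R - S) * ((1 - x) ^ card A * x ^ (card (R \<inter> S) - card A))
      = (1 - x) ^ card A * x ^ (card R - card A)" by (simp add: power_add)
  qed simp
  finally show ?thesis .
qed

text \<open>With \<open>B\<close> a random subset of \<open>R\<close> containing each point independently with probability
  \<open>1 - x\<close>, the weight \<open>x ^ card (R - S)\<close> is the probability that \<open>B \<subseteq> S\<close>.  This turns a sum
  of weights over the subspaces avoiding \<open>i\<close> into an average of differences of containment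
  counts.\<close>

lemma avoiding_weight_eq_sum_Pow:
  fixes x :: real
  assumes R: "finite R" "i \<notin> R"
  shows "(if Y \<subseteq> S \<and> i \<notin> S then x ^ card (insert i (Y \<union> R) - S) else 0)
    = x * (\<Sum>A\<in>Pow R. (1 - x) ^ card A * x ^ (card R - card A)
             * (of_bool (Y \<union> A \<subseteq> S) - of_bool (insert i (Y \<union> A) \<subseteq> S)))"
proof (cases "Y \<subseteq> S \<and> i \<notin> S")
  case True
  then have "insert i (Y \<union> R) - S = insert i (R - S)" by auto
  then have "x ^ card (insert i (Y \<union> R) - S) = x * x ^ card (R - S)"
    using R by simp
  also have "x ^ card (R - S) = (\<Sum>A\<in>Pow (R \<inter> S). (1 - x) ^ card A * x ^ (card R - card A))"
    by (rule power_card_Diff_eq_sum_Pow[OF R(1)])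
  also have "\<dots> = (\<Sum>A\<in>Pow R. (1 - x) ^ card A * x ^ (card R - card A) * of_bool (A \<subseteq> S))"
    using R(1) by (intro sum.mono_neutral_cong_left) auto
  finally show ?thesis using True by simp
next
  case False
  then have "of_bool (Y \<union> A \<subseteq> S) - of_bool (insert i (Y \<union> A) \<subseteq> S) = (0::real)" for A
    by auto
  with False show ?thesis by (simp only: if_False mult_zero_right sum.neutral_const)
qed

definition nonzero_vectors :: "nat \<Rightarrow> nat set" where
  "nonzero_vectors k = {..<2^k} - {0}"

lemma mem_nonzero_vectors [simp]: "i \<in> nonzero_vectors k \<longleftrightarrow> 0 < i \<and> i < 2^k"
  by (auto simp: nonzero_vectors_def)

lemma finite_nonzero_vectors [simp]: "finite (nonzero_vectors k)"
  by (simp add: nonzero_vectors_def)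

lemma Ksum_avoiding_pos:
  fixes x :: real
  assumes x: "0 < x" "x < 1" and Y: "Y \<subseteq> nonzero_vectors k" and i: "i \<in> nonzero_vectors k"
    and gap: "Ksum k (\<lambda>S. of_bool (insert i Y \<subseteq> S)) < Ksum k (\<lambda>S. of_bool (Y \<subseteq> S))"
  shows "0 < Ksum k (\<lambda>S. if Y \<subseteq> S \<and> i \<notin> S then x ^ card (nonzero_vectors k - S) else 0)"
proof -
  define R where "R = nonzero_vectors k - Y - {i}"
  define t where "t A = (1 - x) ^ card A * x ^ (card R - card A)" for A :: "nat set"
  define gain where "gain A = Ksum k (\<lambda>S. of_bool (Y \<union> A \<subseteq> S)) - Ksum k (\<lambda>S. of_bool (insert i (Y \<union> A) \<subseteq> S))"
    for A
  have R: "finite R" "i \<notin> R" and V: "insert i (Y \<union> R) = nonzero_vectors k"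
    using Y i by (auto simp: R_def)
  have "Ksum k (\<lambda>S. if Y \<subseteq> S \<and> i \<notin> S then x ^ card (nonzero_vectors k - S) else 0)
    = Ksum k (\<lambda>S. x * (\<Sum>A\<in>Pow R. t A * (of_bool (Y \<union> A \<subseteq> S) - of_bool (insert i (Y \<union> A) \<subseteq> S))))"
    using avoiding_weight_eq_sum_Pow[OF R, of Y] unfolding V by (simp add: t_def)
  also have "\<dots> = x * (\<Sum>A\<in>Pow R. t A * gain A)"
    by (simp only: Ksum_mult_left Ksum_sum Ksum_diff gain_def)
  finally have sum_eq: "Ksum k (\<lambda>S. if Y \<subseteq> S \<and> i \<notin> S then x ^ card (nonzero_vectors k - S) else 0)
    = x * (\<Sum>A\<in>Pow R. t A * gain A)" .
  have "0 < t {} * gain {}"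
    using x gap by (simp add: t_def gain_def)
  moreover have "0 \<le> t A * gain A" if "A \<in> Pow R" for A
  proof -
    have "insert i (Y \<union> A) \<subseteq> {..<2^k}" using that V by auto
    from Ksum_contains_antimono[OF subset_insertI this] have "0 \<le> gain A"
      unfolding gain_def by linarith
    then show ?thesis using x by (simp add: t_def)
  qed
  ultimately have "0 < (\<Sum>A\<in>Pow R. t A * gain A)"
    using R(1) by (intro sum_pos2[of _ "{}"]) auto
  with sum_eq show ?thesis using x by simp
qed

lemma card_nonzero_Diff_Xi:
  assumes "S \<in> Xi k (k - \<delta>)" "\<delta> \<le> k"
  shows "card (nonzero_vectors k - S) = 2^k - 2^(k - \<delta>)"
proof -
  have S: "is_subspace k S" "card S = 2^(k - \<delta>)" using assms by (auto simp: Xi_def)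
  have "nonzero_vectors k - S = {..<2^k} - S" using is_subspace_zero[OF S(1)] by (auto simp: nonzero_vectors_def)
  moreover have "S \<subseteq> {..<2^k}" using S(1) by (auto simp: is_subspace_def)
  ultimately show ?thesis using S(2) by (simp add: card_Diff_subset is_subspace_finite[OF S(1)])
qed

text \<open>On \<open>\<Xi>(W, \<kappa>-\<delta>)\<close> the weight \<open>x ^ card (nonzero_vectors k - S)\<close> is constant, so the weighted sum
  over the subspaces containing \<open>Y\<close> but not \<open>i\<close> only depends on the dimensions \<open>a\<close> and \<open>b\<close> of
  the spans of \<open>Y\<close> and \<open>insert i Y\<close>.\<close>

definition avoid_coeff :: "nat \<Rightarrow> nat \<Rightarrow> nat \<Rightarrow> real \<Rightarrow> real" where
  "avoid_coeff k a b x =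
     (\<Sum>\<delta>=1..k. Kc \<delta> * (real (gbinom2 (k - a) \<delta>) - real (gbinom2 (k - b) \<delta>)) * x ^ (2^k - 2^(k - \<delta>)))"

lemma Ksum_avoiding_eq:
  assumes "Y \<subseteq> {..<2^k}" "i < 2^k"
    and a: "card (xor_span k Y) = 2^a" and b: "card (xor_span k (insert i Y)) = 2^b"
  shows "Ksum k (\<lambda>S. if Y \<subseteq> S \<and> i \<notin> S then x ^ card (nonzero_vectors k - S) else 0) = avoid_coeff k a b x"
  unfolding Ksum_def avoid_coeff_def
proof (rule sum.cong[OF refl])
  fix \<delta> assume "\<delta> \<in> {1..k}"
  then have \<delta>: "\<delta> \<le> k" by simp
  have "(\<Sum>S\<in>Xi k (k - \<delta>). if Y \<subseteq> S \<and> i \<notin> S then x ^ card (nonzero_vectors k - S) else 0)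
    = (\<Sum>S\<in>Xi k (k - \<delta>). (of_bool (Y \<subseteq> S) - of_bool (insert i Y \<subseteq> S)) * x ^ (2^k - 2^(k - \<delta>)))"
    using card_nonzero_Diff_Xi[OF _ \<delta>] by (intro sum.cong) auto
  also have "\<dots> = (real (card {S \<in> Xi k (k - \<delta>). Y \<subseteq> S}) - real (card {S \<in> Xi k (k - \<delta>). insert i Y \<subseteq> S}))
      * x ^ (2^k - 2^(k - \<delta>))"
    by (simp add: sum_distrib_right[symmetric] sum_subtractf finite_Xi Int_def)
  finally show "Kc \<delta> * (\<Sum>S\<in>Xi k (k - \<delta>). if Y \<subseteq> S \<and> i \<notin> S then x ^ card (nonzero_vectors k - S) else 0)
    = Kc \<delta> * (real (gbinom2 (k - a) \<delta>) - real (gbinom2 (k - b) \<delta>)) * x ^ (2^k - 2^(k - \<delta>))"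
    using card_Xi_containing[OF assms(1) \<delta> a] card_Xi_containing[OF _ \<delta> b] assms(1,2) by simp
qed

lemma avoid_coeff_pos:
  assumes x: "0 < x" "x < 1" and Y: "Y \<subseteq> nonzero_vectors k" and i: "i \<in> nonzero_vectors k"
    and a: "card (xor_span k Y) = 2^a" and b: "card (xor_span k (insert i Y)) = 2^b" and "a < b"
  shows "0 < avoid_coeff k a b x"
proof -
  have YZ: "Y \<subseteq> {..<2^k}" "insert i Y \<subseteq> {..<2^k}" using Y i by auto
  have "Ksum k (\<lambda>S. of_bool (insert i Y \<subseteq> S)) < Ksum k (\<lambda>S. of_bool (Y \<subseteq> S))"
    using Ksum_contains[OF YZ(1) a] Ksum_contains[OF YZ(2) b] \<open>a < b\<close> by simp
  from Ksum_avoiding_pos[OF x Y i this] show ?thesis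
    using Ksum_avoiding_eq[OF YZ(1) _ a b] i by simp
qed

lemma avoid_coeff_0_1_pos:
  assumes "1 \<le> k" "0 < x" "x < 1"
  shows "0 < avoid_coeff k 0 1 x"
proof -
  have "(1::nat) < 2^k" using assms(1) one_less_power[of "2::nat" k] by simp
  then show ?thesis
    using assms(2,3) by (intro avoid_coeff_pos[of x "{}" k 1]) (auto simp: xor_span_empty xor_span_singleton)
qed

lemma quadratic_coeff_less:
  assumes "1 \<le> k" "0 < x" "x < 1"
  obtains c2 where "c2 < avoid_coeff k 0 1 x"
    and "\<And>u. (avoid_coeff k 0 1 x - avoid_coeff k 1 2 x) / 2
            * ((\<Sum>i\<in>nonzero_vectors k. u i)\<^sup>2 - (\<Sum>i\<in>nonzero_vectors k. (u i)\<^sup>2))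
          = c2 / 2 * ((\<Sum>i\<in>nonzero_vectors k. u i)\<^sup>2 - (\<Sum>i\<in>nonzero_vectors k. (u i)\<^sup>2))"
proof (cases "k = 1")
  case True
  then have "nonzero_vectors k = {1}" by auto
  then show ?thesis using that[of 0] avoid_coeff_0_1_pos[OF assms] by (simp add: power2_eq_square)
next
  case False
  then have "(2::nat) < 2^k"
    using assms(1) power_strict_increasing[of 1 k "2::nat"] by simp
  then have "0 < avoid_coeff k 1 2 x"
    using assms(2,3) card_xor_span_pair[of 2 1 k]
    by (intro avoid_coeff_pos[of x "{2}" k 1]) (auto simp: xor_span_singleton insert_commute)
  then show ?thesis using that[of "avoid_coeff k 0 1 x - avoid_coeff k 1 2 x"] by simp
qed

subsection \<open>Second-order expansion of the loss\<close>

definition esym2 :: "(nat \<Rightarrow> real) \<Rightarrow> nat set \<Rightarrow> real" where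
  "esym2 u T = ((\<Sum>i\<in>T. u i)\<^sup>2 - (\<Sum>i\<in>T. (u i)\<^sup>2)) / 2"

definition prod_remainder :: "(nat \<Rightarrow> real) \<Rightarrow> nat set \<Rightarrow> real" where
  "prod_remainder u T = (\<Prod>i\<in>T. 1 + u i) - 1 - (\<Sum>i\<in>T. u i) - esym2 u T"

lemma square_sum_le_card_mult_sum_squares:
  "finite T \<Longrightarrow> (\<Sum>i\<in>T. a i)\<^sup>2 \<le> real (card T) * (\<Sum>i\<in>T. (a i :: real)\<^sup>2)"
proof -
  assume T: "finite T"
  have "(\<Sum>i\<in>T. a i)\<^sup>2 = (\<Sum>i\<in>T. \<Sum>j\<in>T. a i * a j)"
    by (simp add: power2_eq_square sum_product)
  also have "\<dots> \<le> (\<Sum>i\<in>T. \<Sum>j\<in>T. ((a i)\<^sup>2 + (a j)\<^sup>2) / 2)"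
  proof (intro sum_mono)
    fix i j
    have "0 \<le> (a i - a j)\<^sup>2" by simp
    then show "a i * a j \<le> ((a i)\<^sup>2 + (a j)\<^sup>2) / 2" by (simp add: power2_eq_square algebra_simps)
  qed
  also have "\<dots> = real (card T) * (\<Sum>i\<in>T. (a i)\<^sup>2)"
    by (simp add: sum.distrib add_divide_distrib sum_divide_distrib[symmetric] sum_distrib_left[symmetric]
        sum.swap[of "\<lambda>i j. (a j)\<^sup>2"] mult.commute)
  finally show ?thesis .
qed

lemma esym2_eq_sum_pairs: "finite T \<Longrightarrow> esym2 u T = (\<Sum>i\<in>T. \<Sum>j\<in>T - {i}. u i * u j) / 2"
proof -
  assume T: "finite T"
  have "(\<Sum>i\<in>T. u i)\<^sup>2 = (\<Sum>i\<in>T. (u i)\<^sup>2 + (\<Sum>j\<in>T - {i}. u i * u j))"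
    unfolding power2_eq_square sum_product using T
    by (intro sum.cong refl) (simp add: sum.remove)
  then show ?thesis unfolding esym2_def by (simp add: sum.distrib)
qed

lemma abs_esym2_le: "finite T \<Longrightarrow> \<bar>esym2 u T\<bar> \<le> real (card T) * (\<Sum>i\<in>T. (u i)\<^sup>2)"
proof (cases "T = {}")
  case False
  assume T: "finite T"
  have Q: "0 \<le> (\<Sum>i\<in>T. (u i)\<^sup>2)" by (simp add: sum_nonneg)
  have "(\<Sum>i\<in>T. (u i)\<^sup>2) \<le> real (card T) * (\<Sum>i\<in>T. (u i)\<^sup>2)"
    using False T Q by (simp add: Suc_le_eq card_gt_0_iff mult_le_cancel_right1)
  moreover note square_sum_le_card_mult_sum_squares[OF T, of u]
  moreover have "0 \<le> (\<Sum>i\<in>T. u i)\<^sup>2" by simp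
  moreover have "\<bar>(P - Q) / 2\<bar> \<le> B" if "Q \<le> B" "P \<le> B" "0 \<le> P" "0 \<le> Q" for P Q B :: real
    using that by (simp add: abs_le_iff field_simps)
  ultimately show ?thesis using Q unfolding esym2_def by blast
qed (simp add: esym2_def)

lemma prod_remainder_insert:
  "finite T \<Longrightarrow> t \<notin> T \<Longrightarrow>
    prod_remainder u (insert t T) = prod_remainder u T + u t * (esym2 u T + prod_remainder u T)"
  unfolding prod_remainder_def esym2_def by (simp add: power2_eq_square field_simps)

lemma abs_prod_remainder_le:
  assumes "finite T" "\<forall>i\<in>T. \<bar>u i\<bar> \<le> m" "0 \<le> m" "m \<le> 1"
  shows "\<bar>prod_remainder u T\<bar> \<le> m * real (card T) * (\<Sum>i\<in>T. (u i)\<^sup>2) * (2 ^ card T - 1)"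
  using assms
proof (induction T rule: finite_induct)
  case empty then show ?case by (simp add: prod_remainder_def esym2_def)
next
  case (insert t T)
  define Q where "Q = (\<Sum>i\<in>T. (u i)\<^sup>2)"
  define Q' where "Q' = (\<Sum>i\<in>insert t T. (u i)\<^sup>2)"
  have Q: "0 \<le> Q" "Q \<le> Q'" unfolding Q_def Q'_def using insert by (auto simp: sum_nonneg)
  have u_t: "\<bar>u t\<bar> \<le> m" using insert by simp
  have IH: "\<bar>prod_remainder u T\<bar> \<le> m * real (card T) * Q * (2 ^ card T - 1)"
    using insert unfolding Q_def by simp
  have E: "\<bar>esym2 u T\<bar> \<le> real (card T) * Q" using abs_esym2_le[OF insert(1)] unfolding Q_def .
  have "\<bar>prod_remainder u (insert t T)\<bar> \<le> \<bar>prod_remainder u T\<bar> + \<bar>u t\<bar> * (\<bar>esym2 u T\<bar> + \<bar>prod_remainder u T\<bar>)"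
    unfolding prod_remainder_insert[OF insert(1,2)] abs_mult[symmetric]
    by (rule order.trans[OF abs_triangle_ineq]) (simp add: abs_mult mult_left_mono)
  also have "\<dots> \<le> \<bar>prod_remainder u T\<bar> + m * (real (card T) * Q + \<bar>prod_remainder u T\<bar>)"
    using u_t E by (intro add_left_mono mult_mono) auto
  also have "\<dots> \<le> 2 * \<bar>prod_remainder u T\<bar> + m * real (card T) * Q"
    using insert.prems mult_left_le_one_le[of "\<bar>prod_remainder u T\<bar>" m] by (simp add: algebra_simps)
  also have "\<dots> \<le> m * real (card T) * Q * (2 ^ Suc (card T) - 1)"
    using IH by (simp add: algebra_simps)
  also have "\<dots> \<le> m * real (card (insert t T)) * Q' * (2 ^ card (insert t T) - 1)"
    using insert Q one_le_power[of "2::real" "Suc (card T)"] by (intro mult_mono) auto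
  finally show ?case unfolding Q'_def .
qed

lemma sum_Diff_eq_sum_if: "finite V \<Longrightarrow> (\<Sum>i\<in>V - S. g i) = (\<Sum>i\<in>V. if i \<notin> S then g i else 0)"
  by (simp add: sum.inter_filter[symmetric] set_diff_eq)

lemma Ksum_linear_term:
  "Ksum k (\<lambda>S. x ^ card (nonzero_vectors k - S) * (\<Sum>i\<in>nonzero_vectors k - S. u i))
    = avoid_coeff k 0 1 x * (\<Sum>i\<in>nonzero_vectors k. u i)"
proof -
  let ?V = "nonzero_vectors k" and ?w = "\<lambda>S. x ^ card (nonzero_vectors k - S)"
  have "Ksum k (\<lambda>S. ?w S * (\<Sum>i\<in>?V - S. u i))
    = Ksum k (\<lambda>S. \<Sum>i\<in>?V. u i * (if {} \<subseteq> S \<and> i \<notin> S then ?w S else 0))"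
    by (auto simp: sum_Diff_eq_sum_if sum_distrib_left intro!: arg_cong[where f = "Ksum k"] sum.cong)
  also have "\<dots> = (\<Sum>i\<in>?V. u i * avoid_coeff k 0 1 x)"
  proof (simp only: Ksum_sum Ksum_mult_left, intro sum.cong refl)
    fix i assume "i \<in> ?V"
    then show "u i * Ksum k (\<lambda>S. if {} \<subseteq> S \<and> i \<notin> S then ?w S else 0) = u i * avoid_coeff k 0 1 x"
      by (subst Ksum_avoiding_eq) (auto simp: xor_span_empty xor_span_singleton)
  qed
  finally show ?thesis by (simp add: sum_distrib_right mult.commute)
qed

lemma Ksum_quadratic_term:
  "Ksum k (\<lambda>S. x ^ card (nonzero_vectors k - S) * esym2 u (nonzero_vectors k - S))
    = (avoid_coeff k 0 1 x - avoid_coeff k 1 2 x) / 2 * ((\<Sum>i\<in>nonzero_vectors k. u i)\<^sup>2 - (\<Sum>i\<in>nonzero_vectors k. (u i)\<^sup>2))"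
proof -
  let ?V = "nonzero_vectors k" and ?w = "\<lambda>S. x ^ card (nonzero_vectors k - S)"
  let ?avoid = "\<lambda>Y i S. if Y \<subseteq> S \<and> i \<notin> S then ?w S else 0"
  have "?w S * esym2 u (?V - S)
    = (\<Sum>i\<in>?V. \<Sum>j\<in>?V - {i}. u i * u j * (?avoid {} i S - ?avoid {j} i S)) / 2" for S
  proof -
    have "?V - S - {i} = (?V - {i}) - S" for i by auto
    then have "esym2 u (?V - S)
      = (\<Sum>i\<in>?V. if i \<notin> S then \<Sum>j\<in>?V - {i}. if j \<notin> S then u i * u j else 0 else 0) / 2"
      by (simp add: esym2_eq_sum_pairs sum_Diff_eq_sum_if[where S = S])
    moreover have "?w S * (\<Sum>i\<in>?V. if i \<notin> S then \<Sum>j\<in>?V - {i}. if j \<notin> S then u i * u j else 0 else 0)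
      = (\<Sum>i\<in>?V. \<Sum>j\<in>?V - {i}. u i * u j * (?avoid {} i S - ?avoid {j} i S))"
      unfolding sum_distrib_left
      by (intro sum.cong refl) (auto simp: sum_distrib_left intro!: sum.cong split: if_split_asm)
    ultimately show ?thesis by (simp only: times_divide_eq_right)
  qed
  then have "Ksum k (\<lambda>S. ?w S * esym2 u (?V - S))
    = (\<Sum>i\<in>?V. \<Sum>j\<in>?V - {i}. u i * u j * (Ksum k (?avoid {} i) - Ksum k (?avoid {j} i))) / 2"
    by (simp only: Ksum_divide Ksum_sum Ksum_mult_left Ksum_diff)
  also have "\<dots> = (avoid_coeff k 0 1 x - avoid_coeff k 1 2 x) / 2 * (\<Sum>i\<in>?V. \<Sum>j\<in>?V - {i}. u i * u j)"
  proof -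
    have "Ksum k (?avoid {} i) = avoid_coeff k 0 1 x" "Ksum k (?avoid {j} i) = avoid_coeff k 1 2 x"
      if "i \<in> ?V" "j \<in> ?V - {i}" for i j
      using that Ksum_avoiding_eq[of "{}" k i 0 1] Ksum_avoiding_eq[of "{j}" k i 1 2]
        card_xor_span_pair[of j i k] by (auto simp: xor_span_empty xor_span_singleton insert_commute)
    then have "(\<Sum>i\<in>?V. \<Sum>j\<in>?V - {i}. u i * u j * (Ksum k (?avoid {} i) - Ksum k (?avoid {j} i)))
      = (\<Sum>i\<in>?V. \<Sum>j\<in>?V - {i}. u i * u j) * (avoid_coeff k 0 1 x - avoid_coeff k 1 2 x)"
      unfolding sum_distrib_right by (intro sum.cong refl) auto
    then show ?thesis by (simp add: ac_simps)
  qed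
  also have "(\<Sum>i\<in>?V. \<Sum>j\<in>?V - {i}. u i * u j) = (\<Sum>i\<in>?V. u i)\<^sup>2 - (\<Sum>i\<in>?V. (u i)\<^sup>2)"
    using esym2_eq_sum_pairs[of ?V u] by (simp add: esym2_def)
  finally show ?thesis .
qed

lemma Ksum_prod_expansion:
  "Ksum k (\<lambda>S. \<Prod>i\<in>nonzero_vectors k - S. x * (1 + u i))
    = Ksum k (\<lambda>S. x ^ card (nonzero_vectors k - S))
      + avoid_coeff k 0 1 x * (\<Sum>i\<in>nonzero_vectors k. u i)
      + (avoid_coeff k 0 1 x - avoid_coeff k 1 2 x) / 2
          * ((\<Sum>i\<in>nonzero_vectors k. u i)\<^sup>2 - (\<Sum>i\<in>nonzero_vectors k. (u i)\<^sup>2))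
      + Ksum k (\<lambda>S. x ^ card (nonzero_vectors k - S) * prod_remainder u (nonzero_vectors k - S))"
proof -
  let ?V = "nonzero_vectors k"
  have "(\<Prod>i\<in>?V - S. x * (1 + u i)) = x ^ card (?V - S)
      + x ^ card (?V - S) * (\<Sum>i\<in>?V - S. u i) + x ^ card (?V - S) * esym2 u (?V - S)
      + x ^ card (?V - S) * prod_remainder u (?V - S)" for S
    by (simp add: prod.distrib prod_remainder_def distrib_left[symmetric] del: distrib_left)
      (simp add: algebra_simps)
  then show ?thesis
    by (simp add: Ksum_add Ksum_linear_term Ksum_quadratic_term)
qed

lemma abs_Ksum_remainder_le:
  fixes x :: real
  assumes "0 \<le> x" "x \<le> 1"
  obtains C where "\<And>u m. 0 \<le> m \<Longrightarrow> m \<le> 1 \<Longrightarrow> (\<forall>i\<in>nonzero_vectors k. \<bar>u i\<bar> \<le> m) \<Longrightarrow>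
      \<bar>Ksum k (\<lambda>S. x ^ card (nonzero_vectors k - S) * prod_remainder u (nonzero_vectors k - S))\<bar>
        \<le> C * m * (\<Sum>i\<in>nonzero_vectors k. (u i)\<^sup>2)"
proof
  let ?V = "nonzero_vectors k" and ?N = "card (nonzero_vectors k)"
  define C where "C = (\<Sum>\<delta>=1..k. \<bar>Kc \<delta>\<bar> * card (Xi k (k - \<delta>))) * ?N * 2 ^ ?N"
  fix u :: "nat \<Rightarrow> real" and m :: real
  assume m: "0 \<le> m" "m \<le> 1" and u: "\<forall>i\<in>?V. \<bar>u i\<bar> \<le> m"
  define Q where "Q = (\<Sum>i\<in>?V. (u i)\<^sup>2)"
  have "\<bar>x ^ card (?V - S) * prod_remainder u (?V - S)\<bar> \<le> m * ?N * Q * 2 ^ ?N" for S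
  proof -
    have card_le: "card (?V - S) \<le> ?N" by (simp add: card_mono)
    have "\<bar>prod_remainder u (?V - S)\<bar> \<le> m * card (?V - S) * (\<Sum>i\<in>?V - S. (u i)\<^sup>2) * (2 ^ card (?V - S) - 1)"
      using u m by (intro abs_prod_remainder_le) auto
    also have "\<dots> \<le> m * ?N * Q * 2 ^ ?N"
    proof -
      have "(2::real) ^ card (?V - S) - 1 \<le> 2 ^ ?N"
        using power_increasing[OF card_le, of "2::real"] by linarith
      then show ?thesis
        using m card_le unfolding Q_def by (intro mult_mono sum_mono2) (auto simp: sum_nonneg)
    qed
    finally have rem_le: "\<bar>prod_remainder u (?V - S)\<bar> \<le> m * ?N * Q * 2 ^ ?N" .
    have "\<bar>x ^ card (?V - S)\<bar> \<le> 1" using assms by (simp add: power_le_one)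
    then show ?thesis
      unfolding abs_mult using mult_left_le_one_le[of "\<bar>prod_remainder u (?V - S)\<bar>"] rem_le
      by (meson abs_ge_zero order.trans)
  qed
  then show "\<bar>Ksum k (\<lambda>S. x ^ card (?V - S) * prod_remainder u (?V - S))\<bar> \<le> C * m * Q"
    by (rule order.trans[OF abs_Ksum_le]) (simp add: C_def algebra_simps)
qed

subsection \<open>Local minimality\<close>

lemma exp_minus_one_ge_quadratic:
  fixes \<xi> \<tau> :: real
  assumes "\<bar>\<xi>\<bar> \<le> \<tau>"
  shows "\<xi> + \<xi>\<^sup>2 * (1/2 - \<tau> * exp \<tau> / 6) \<le> exp \<xi> - 1"
proof -
  obtain t where t: "\<bar>t\<bar> \<le> \<bar>\<xi>\<bar>" "exp \<xi> = (\<Sum>m<3. \<xi> ^ m / fact m) + exp t / fact 3 * \<xi> ^ 3"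
    using Maclaurin_exp_le[of \<xi> 3] by blast
  have "(\<Sum>m<3. \<xi> ^ m / fact m) = 1 + \<xi> + \<xi>\<^sup>2 / 2"
    by (simp add: numeral_3_eq_3 power2_eq_square)
  moreover have "\<bar>exp t * \<xi> ^ 3\<bar> \<le> \<tau> * exp \<tau> * \<xi>\<^sup>2"
  proof -
    have "\<bar>exp t * \<xi> ^ 3\<bar> = exp t * (\<bar>\<xi>\<bar> * \<xi>\<^sup>2)"
      by (simp add: abs_mult power_abs power3_eq_cube power2_eq_square)
    also have "\<dots> \<le> exp \<tau> * (\<tau> * \<xi>\<^sup>2)"
      using t(1) assms by (intro mult_mono) (auto intro: mult_right_mono)
    finally show ?thesis by (simp add: ac_simps)
  qed
  then have "- (\<tau> * exp \<tau> * \<xi>\<^sup>2) / 6 \<le> exp t / fact 3 * \<xi> ^ 3"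
    by (simp add: fact_numeral abs_le_iff)
  ultimately show ?thesis using t(2) by (simp add: algebra_simps)
qed

lemma abs_exp_minus_one_le: "\<bar>exp \<xi> - 1\<bar> \<le> exp \<bar>\<xi>\<bar> * \<bar>\<xi>\<bar>" for \<xi> :: real
proof -
  obtain t where t: "\<bar>t\<bar> \<le> \<bar>\<xi>\<bar>" "exp \<xi> = (\<Sum>m<1. \<xi> ^ m / fact m) + exp t / fact 1 * \<xi> ^ 1"
    using Maclaurin_exp_le[of \<xi> 1] by blast
  then have "exp \<xi> - 1 = exp t * \<xi>" by simp
  moreover have "exp t \<le> exp \<bar>\<xi>\<bar>" using t(1) by simp
  ultimately show ?thesis by (simp add: abs_mult mult_right_mono)
qed

lemma abs_exp_minus_one_le_radius: "\<bar>\<xi>\<bar> \<le> \<tau> \<Longrightarrow> \<bar>exp \<xi> - 1\<bar> \<le> \<tau> * exp \<tau>" for \<xi> \<tau> :: real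
  using abs_exp_minus_one_le[of \<xi>] mult_mono[of "exp \<bar>\<xi>\<bar>" "exp \<tau>" "\<bar>\<xi>\<bar>" \<tau>]
  by (simp add: mult.commute)

lemma sum_exp_minus_one_ge_sum_squares:
  fixes \<xi> :: "nat \<Rightarrow> real" and \<tau> :: real
  assumes V: "finite V" and \<xi>: "\<forall>i\<in>V. \<bar>\<xi> i\<bar> \<le> \<tau>" and sum_\<xi>: "0 \<le> (\<Sum>i\<in>V. \<xi> i)"
    and small: "0 \<le> 1/2 - \<tau> * exp \<tau> / 6"
  shows "exp (-2 * \<tau>) * (1/2 - \<tau> * exp \<tau> / 6) * (\<Sum>i\<in>V. (exp (\<xi> i) - 1)\<^sup>2)
    \<le> (\<Sum>i\<in>V. exp (\<xi> i) - 1)"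
proof -
  define \<gamma> where "\<gamma> = 1/2 - \<tau> * exp \<tau> / 6"
  have "exp (-2 * \<tau>) * (exp (\<xi> i) - 1)\<^sup>2 \<le> (\<xi> i)\<^sup>2" if "i \<in> V" for i
  proof -
    have "\<bar>exp (\<xi> i) - 1\<bar> \<le> exp \<tau> * \<bar>\<xi> i\<bar>"
    proof -
      have "exp \<bar>\<xi> i\<bar> \<le> exp \<tau>" using \<xi> that by auto
      then show ?thesis
        using abs_exp_minus_one_le[of "\<xi> i"] by (meson abs_ge_zero mult_right_mono order.trans)
    qed
    then have "(exp (\<xi> i) - 1)\<^sup>2 \<le> (exp \<tau>)\<^sup>2 * (\<xi> i)\<^sup>2"
      by (metis abs_ge_zero power2_abs power_mono power_mult_distrib)
    then have "exp (-2 * \<tau>) * (exp (\<xi> i) - 1)\<^sup>2 \<le> exp (-2 * \<tau>) * (exp \<tau>)\<^sup>2 * (\<xi> i)\<^sup>2"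
      unfolding mult.assoc by (rule mult_left_mono) simp
    moreover have "exp (-2 * \<tau>) * (exp \<tau>)\<^sup>2 = 1"
      by (simp add: power2_eq_square mult_exp_exp)
    ultimately show ?thesis by (simp only: mult_1_left)
  qed
  then have "\<gamma> * (exp (-2 * \<tau>) * (\<Sum>i\<in>V. (exp (\<xi> i) - 1)\<^sup>2)) \<le> \<gamma> * (\<Sum>i\<in>V. (\<xi> i)\<^sup>2)"
    using small by (intro mult_left_mono) (auto simp: sum_distrib_left \<gamma>_def intro: sum_mono)
  also have "\<dots> \<le> (\<Sum>i\<in>V. \<xi> i + (\<xi> i)\<^sup>2 * \<gamma>)"
    using sum_\<xi> by (simp add: sum.distrib sum_distrib_left mult.commute)
  also have "\<dots> \<le> (\<Sum>i\<in>V. exp (\<xi> i) - 1)"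
    using \<xi> exp_minus_one_ge_quadratic unfolding \<gamma>_def by (intro sum_mono) blast
  finally show ?thesis by (simp add: \<gamma>_def ac_simps)
qed

lemma quadratic_increment_nonneg:
  fixes s Q \<beta> c1 c2 \<mu> C R N :: real
  assumes "\<beta> * Q \<le> s" "0 \<le> \<beta>" "0 \<le> Q" "s \<le> N * \<mu>" "0 \<le> c1 - \<bar>c2\<bar> * N * \<mu> / 2"
    and "\<bar>R\<bar> \<le> C * \<mu> * Q" "0 \<le> \<beta> * (c1 - \<bar>c2\<bar> * N * \<mu> / 2) - c2 / 2 - C * \<mu>"
  shows "0 \<le> c1 * s + c2 / 2 * (s\<^sup>2 - Q) + R"
proof -
  define c where "c = c1 - \<bar>c2\<bar> * N * \<mu> / 2"
  have s: "0 \<le> s" using assms(1-3) by (meson mult_nonneg_nonneg order_trans)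
  have "s * s \<le> s * (N * \<mu>)" using s assms(4) by (rule mult_left_mono[rotated])
  then have "- (\<bar>c2\<bar> / 2) * (s * (N * \<mu>)) \<le> - (\<bar>c2\<bar> / 2) * (s * s)"
    by (simp add: mult_left_mono)
  also have "\<dots> \<le> c2 / 2 * s\<^sup>2"
    using mult_right_mono[of "- (\<bar>c2\<bar> / 2)" "c2 / 2" "s * s"] by (simp add: power2_eq_square)
  finally have "- (\<bar>c2\<bar> / 2) * (s * (N * \<mu>)) \<le> c2 / 2 * s\<^sup>2" .
  then have "s * c \<le> c1 * s + c2 / 2 * s\<^sup>2" by (simp add: c_def algebra_simps)
  moreover have "\<beta> * Q * c \<le> s * c"
    using assms(1,5) by (simp add: c_def mult_right_mono)
  moreover have "0 \<le> Q * (\<beta> * c - c2 / 2 - C * \<mu>)"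
    using assms(3,7) by (simp add: c_def)
  ultimately show ?thesis using assms(6) by (simp add: algebra_simps abs_le_iff)
qed

lemma small_radius:
  fixes c1 c2 C N :: real
  assumes "0 < c1" "c2 < c1"
  obtains \<tau> where "0 < \<tau>" "0 \<le> 1/2 - \<tau> * exp \<tau> / 6" "\<tau> * exp \<tau> \<le> 1"
    "0 \<le> c1 - \<bar>c2\<bar> * N * (\<tau> * exp \<tau>) / 2"
    "0 \<le> exp (-2 * \<tau>) * (1/2 - \<tau> * exp \<tau> / 6) * (c1 - \<bar>c2\<bar> * N * (\<tau> * exp \<tau>) / 2)
          - c2 / 2 - C * (\<tau> * exp \<tau>)"
proof -
  have lim: "((\<lambda>\<tau>. f \<tau>) \<longlongrightarrow> f 0) (at_right 0) \<Longrightarrow> 0 < f 0 \<Longrightarrow> \<forall>\<^sub>F \<tau> in at_right 0. 0 \<le> f \<tau>"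
    for f :: "real \<Rightarrow> real"
    by (metis (mono_tags, lifting) eventually_mono less_le order_tendstoD(1))
  have "\<forall>\<^sub>F \<tau> in at_right (0::real). 0 \<le> 1/2 - \<tau> * exp \<tau> / 6"
    by (rule lim[of "\<lambda>\<tau>. 1/2 - \<tau> * exp \<tau> / 6"]) (auto intro!: tendsto_eq_intros)
  moreover have "\<forall>\<^sub>F \<tau> in at_right (0::real). 0 \<le> 1 - \<tau> * exp \<tau>"
    by (rule lim[of "\<lambda>\<tau>. 1 - \<tau> * exp \<tau>"]) (auto intro!: tendsto_eq_intros)
  moreover have "\<forall>\<^sub>F \<tau> in at_right (0::real). 0 \<le> c1 - \<bar>c2\<bar> * N * (\<tau> * exp \<tau>) / 2"
    using assms by (intro lim[of "\<lambda>\<tau>. c1 - \<bar>c2\<bar> * N * (\<tau> * exp \<tau>) / 2"]) (auto intro!: tendsto_eq_intros)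
  moreover have "\<forall>\<^sub>F \<tau> in at_right (0::real). 0 \<le> exp (-2 * \<tau>) * (1/2 - \<tau> * exp \<tau> / 6)
      * (c1 - \<bar>c2\<bar> * N * (\<tau> * exp \<tau>) / 2) - c2 / 2 - C * (\<tau> * exp \<tau>)"
    \<comment> \<open>at \<open>\<tau> = 0\<close> this is \<open>(c1 - c2) / 2 > 0\<close>\<close>
    using assms by (intro lim[of "\<lambda>\<tau>. exp (-2 * \<tau>) * (1/2 - \<tau> * exp \<tau> / 6)
      * (c1 - \<bar>c2\<bar> * N * (\<tau> * exp \<tau>) / 2) - c2 / 2 - C * (\<tau> * exp \<tau>)"]) (auto intro!: tendsto_eq_intros)
  ultimately have "\<forall>\<^sub>F \<tau> in at_right (0::real). 0 \<le> 1/2 - \<tau> * exp \<tau> / 6 \<and> \<tau> * exp \<tau> \<le> 1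
    \<and> 0 \<le> c1 - \<bar>c2\<bar> * N * (\<tau> * exp \<tau>) / 2
    \<and> 0 \<le> exp (-2 * \<tau>) * (1/2 - \<tau> * exp \<tau> / 6) * (c1 - \<bar>c2\<bar> * N * (\<tau> * exp \<tau>) / 2)
          - c2 / 2 - C * (\<tau> * exp \<tau>)"
    by eventually_elim auto
  then obtain b where "0 < b" and "\<forall>\<tau>>0. \<tau> < b \<longrightarrow> 0 \<le> 1/2 - \<tau> * exp \<tau> / 6 \<and> \<tau> * exp \<tau> \<le> 1
    \<and> 0 \<le> c1 - \<bar>c2\<bar> * N * (\<tau> * exp \<tau>) / 2
    \<and> 0 \<le> exp (-2 * \<tau>) * (1/2 - \<tau> * exp \<tau> / 6) * (c1 - \<bar>c2\<bar> * N * (\<tau> * exp \<tau>) / 2)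
          - c2 / 2 - C * (\<tau> * exp \<tau>)"
    by (auto simp: eventually_at_right_field)
  moreover have "0 < b / 2" "b / 2 < b" using \<open>0 < b\<close> by auto
  ultimately show ?thesis using that by blast
qed

lemma Ksum_prod_exp_local_min:
  fixes x :: real
  assumes "1 \<le> k" and x: "0 < x" "x < 1"
  obtains \<tau> where "0 < \<tau>"
    and "\<And>\<xi>. \<forall>i\<in>nonzero_vectors k. \<bar>\<xi> i\<bar> \<le> \<tau> \<Longrightarrow> 0 \<le> (\<Sum>i\<in>nonzero_vectors k. \<xi> i) \<Longrightarrow>
      Ksum k (\<lambda>S. x ^ card (nonzero_vectors k - S)) \<le> Ksum k (\<lambda>S. \<Prod>i\<in>nonzero_vectors k - S. x * exp (\<xi> i))"
proof -
  let ?V = "nonzero_vectors k"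
  define c1 where "c1 = avoid_coeff k 0 1 x"
  have c1: "0 < c1" unfolding c1_def using avoid_coeff_0_1_pos[OF assms] .
  obtain c2 where c2: "c2 < c1"
    and quad: "\<And>u. (c1 - avoid_coeff k 1 2 x) / 2 * ((\<Sum>i\<in>?V. u i)\<^sup>2 - (\<Sum>i\<in>?V. (u i)\<^sup>2))
      = c2 / 2 * ((\<Sum>i\<in>?V. u i)\<^sup>2 - (\<Sum>i\<in>?V. (u i)\<^sup>2))"
    using quadratic_coeff_less[OF assms] unfolding c1_def by blast
  obtain C where remainder: "\<And>u m. 0 \<le> m \<Longrightarrow> m \<le> 1 \<Longrightarrow> (\<forall>i\<in>?V. \<bar>u i\<bar> \<le> m) \<Longrightarrow>
      \<bar>Ksum k (\<lambda>S. x ^ card (?V - S) * prod_remainder u (?V - S))\<bar> \<le> C * m * (\<Sum>i\<in>?V. (u i)\<^sup>2)"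
    using abs_Ksum_remainder_le[of x k] x by auto
  obtain \<tau> where "0 < \<tau>" and small: "0 \<le> 1/2 - \<tau> * exp \<tau> / 6" "\<tau> * exp \<tau> \<le> 1"
      "0 \<le> c1 - \<bar>c2\<bar> * card ?V * (\<tau> * exp \<tau>) / 2"
      "0 \<le> exp (-2 * \<tau>) * (1/2 - \<tau> * exp \<tau> / 6) * (c1 - \<bar>c2\<bar> * card ?V * (\<tau> * exp \<tau>) / 2)
        - c2 / 2 - C * (\<tau> * exp \<tau>)"
    using small_radius[OF c1 c2, of "card ?V" C] by blast
  define \<mu> where "\<mu> = \<tau> * exp \<tau>"
  have \<tau>: "0 < \<tau>" "0 \<le> \<mu>" using \<open>0 < \<tau>\<close> by (simp_all add: \<mu>_def)
  note small_\<tau> = small[folded \<mu>_def]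
  show ?thesis
  proof (rule that[OF \<tau>(1)])
    fix \<xi> assume \<xi>: "\<forall>i\<in>?V. \<bar>\<xi> i\<bar> \<le> \<tau>" and sum_\<xi>: "0 \<le> (\<Sum>i\<in>?V. \<xi> i)"
    define u where "u i = exp (\<xi> i) - 1" for i
    define s where "s = (\<Sum>i\<in>?V. u i)"
    define Q where "Q = (\<Sum>i\<in>?V. (u i)\<^sup>2)"
    define R where "R = Ksum k (\<lambda>S. x ^ card (?V - S) * prod_remainder u (?V - S))"
    have u: "\<forall>i\<in>?V. \<bar>u i\<bar> \<le> \<mu>"
      using \<xi> abs_exp_minus_one_le_radius by (simp add: u_def \<mu>_def)
    have "exp (-2 * \<tau>) * (1/2 - \<mu> / 6) * Q \<le> s"
      using sum_exp_minus_one_ge_sum_squares[OF finite_nonzero_vectors \<xi> sum_\<xi>] small_\<tau>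
      by (simp add: \<mu>_def Q_def s_def u_def)
    moreover have "s \<le> card ?V * \<mu>"
      using sum_bounded_above[of ?V u \<mu>] u unfolding s_def by (meson abs_le_iff)
    moreover have "\<bar>R\<bar> \<le> C * \<mu> * Q"
      using remainder[OF \<tau>(2) _ u] small_\<tau> by (simp add: R_def Q_def)
    ultimately have "0 \<le> c1 * s + c2 / 2 * (s\<^sup>2 - Q) + R"
      using small_\<tau>
      by (intro quadratic_increment_nonneg[where \<beta> = "exp (-2 * \<tau>) * (1/2 - \<mu> / 6)"])
        (auto simp: Q_def sum_nonneg)
    moreover have "Ksum k (\<lambda>S. \<Prod>i\<in>?V - S. x * exp (\<xi> i)) = Ksum k (\<lambda>S. \<Prod>i\<in>?V - S. x * (1 + u i))"
      by (simp add: u_def)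
    ultimately show "Ksum k (\<lambda>S. x ^ card (?V - S)) \<le> Ksum k (\<lambda>S. \<Prod>i\<in>?V - S. x * exp (\<xi> i))"
      using Ksum_prod_expansion[of k x u] quad[of u] unfolding c1_def s_def Q_def R_def by linarith
  qed
qed

lemma sum_nonzero_vectors: "(\<Sum>i\<in>nonzero_vectors k. q i) = (\<Sum>i<2^k. q i) - q 0"
  for q :: "nat \<Rightarrow> real"
  by (simp add: nonzero_vectors_def sum_diff1)

lemma qbar_in_simplexC:
  assumes "1 \<le> \<kappa>"
  shows "qbar \<kappa> \<in> simplexC \<kappa>"
proof -
  have "1 < (2::real)^\<kappa>" using assms by (simp add: one_less_power)
  moreover have "card (nonzero_vectors \<kappa>) = 2^\<kappa> - 1" by (simp add: nonzero_vectors_def)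
  moreover have "(1::nat) \<le> 2^\<kappa>" by simp
  ultimately have "(\<Sum>i\<in>nonzero_vectors \<kappa>. qbar \<kappa> i) = 1"
    by (simp add: qbar_def of_nat_diff)
  moreover have "qbar \<kappa> 0 = 0" by (simp add: qbar_def)
  ultimately have "(\<Sum>i<2^\<kappa>. qbar \<kappa> i) = 1"
    using sum_nonzero_vectors[of "qbar \<kappa>" \<kappa>] by simp
  then show ?thesis
    by (simp add: simplexC_def qbar_def)
qed

lemma sum_deviation_from_qbar:
  assumes "1 \<le> \<kappa>" "q \<in> simplexC \<kappa>"
  shows "(\<Sum>i\<in>nonzero_vectors \<kappa>. q i - qbar \<kappa> i) = - q 0"
proof -
  have "(\<Sum>i\<in>nonzero_vectors \<kappa>. q i) = 1 - q 0" "(\<Sum>i\<in>nonzero_vectors \<kappa>. qbar \<kappa> i) = 1"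
    using assms qbar_in_simplexC sum_nonzero_vectors[of q \<kappa>] sum_nonzero_vectors[of "qbar \<kappa>" \<kappa>]
    by (auto simp: simplexC_def qbar_def[of \<kappa> 0])
  then show ?thesis by (simp add: sum_subtractf)
qed

lemma eq_loss_eq_Ksum:
  assumes "q \<in> simplexC \<kappa>" "0 < \<epsilon>"
  shows "eq_loss \<kappa> n \<epsilon> q
    = real n * (1 - \<epsilon>) - real \<kappa> + Ksum \<kappa> (\<lambda>S. \<Prod>i\<in>nonzero_vectors \<kappa> - S. exp (real n * ln \<epsilon> * q i))"
proof -
  have "\<epsilon> powr (real n * (1 - zeta S q)) = (\<Prod>i\<in>nonzero_vectors \<kappa> - S. exp (real n * ln \<epsilon> * q i))"
    if S: "is_subspace \<kappa> S" for S
  proof -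
    have "S \<subseteq> {..<2^\<kappa>}" using S by (auto simp: is_subspace_def)
    then have "(\<Sum>i<2^\<kappa>. q i) = (\<Sum>i\<in>{..<2^\<kappa>} - S. q i) + zeta S q"
      by (simp add: zeta_def sum.subset_diff)
    moreover have "{..<2^\<kappa>} - S = nonzero_vectors \<kappa> - S"
      using is_subspace_zero[OF S] by (auto simp: nonzero_vectors_def)
    ultimately have "1 - zeta S q = (\<Sum>i\<in>nonzero_vectors \<kappa> - S. q i)"
      using assms(1) by (simp add: simplexC_def)
    then show ?thesis
      using assms(2) by (simp add: powr_def exp_sum sum_distrib_left ac_simps)
  qed
  then show ?thesis
    unfolding eq_loss_def Ksum_def by (simp add: Xi_def)
qed

lemma eq_loss_near_qbar:
  assumes "q \<in> simplexC \<kappa>" "0 < \<epsilon>"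
  shows "eq_loss \<kappa> n \<epsilon> q = real n * (1 - \<epsilon>) - real \<kappa>
    + Ksum \<kappa> (\<lambda>S. \<Prod>i\<in>nonzero_vectors \<kappa> - S.
        exp (real n * ln \<epsilon> / (2^\<kappa> - 1)) * exp (real n * ln \<epsilon> * (q i - qbar \<kappa> i)))"
proof -
  have "exp (real n * ln \<epsilon> * q i)
    = exp (real n * ln \<epsilon> / (2^\<kappa> - 1)) * exp (real n * ln \<epsilon> * (q i - qbar \<kappa> i))"
    if "i \<in> nonzero_vectors \<kappa>" for i
    using that by (simp add: qbar_def mult_exp_exp algebra_simps)
  then show ?thesis
    unfolding eq_loss_eq_Ksum[OF assms] by (metis (no_types, lifting) DiffD1 prod.cong)
qed

theorem theorem3:
  fixes \<kappa> n :: nat and \<epsilon> :: real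
  assumes "\<kappa> \<ge> 1" and "n \<ge> 1" and "0 < \<epsilon>" and "\<epsilon> < 1"
  shows "local_minimizer_on \<kappa> (eq_loss \<kappa> n \<epsilon>) (simplexC \<kappa>) (qbar \<kappa>)"
proof -
  let ?V = "nonzero_vectors \<kappa>"
  define \<theta> where "\<theta> = real n * ln \<epsilon>"
  have \<theta>: "\<theta> < 0" using assms by (simp add: \<theta>_def mult_pos_neg)
  define x where "x = exp (\<theta> / (2^\<kappa> - 1))"
  have x: "0 < x" "x < 1"
    using \<theta> assms(1) by (simp_all add: x_def one_less_power divide_neg_pos)
  obtain \<tau> where "0 < \<tau>" and local_min: "\<And>\<xi>. \<forall>i\<in>?V. \<bar>\<xi> i\<bar> \<le> \<tau> \<Longrightarrow> 0 \<le> (\<Sum>i\<in>?V. \<xi> i) \<Longrightarrow>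
      Ksum \<kappa> (\<lambda>S. x ^ card (?V - S)) \<le> Ksum \<kappa> (\<lambda>S. \<Prod>i\<in>?V - S. x * exp (\<xi> i))"
    using Ksum_prod_exp_local_min[OF assms(1) x] by blast
  have qbar: "qbar \<kappa> \<in> simplexC \<kappa>" using qbar_in_simplexC[OF assms(1)] .
  show ?thesis unfolding local_minimizer_on_def
  proof (intro conjI qbar exI[of _ "\<tau> / - \<theta>"] ballI impI)
    show "0 < \<tau> / - \<theta>" using \<open>0 < \<tau>\<close> \<theta> by (simp add: divide_pos_neg)
    fix q assume q: "q \<in> simplexC \<kappa>" and near: "\<forall>i<2^\<kappa>. \<bar>q i - qbar \<kappa> i\<bar> < \<tau> / - \<theta>"
    have "\<bar>\<theta> * (q i - qbar \<kappa> i)\<bar> \<le> \<tau>" if "i \<in> ?V" for i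
    proof -
      from near that have "\<bar>q i - qbar \<kappa> i\<bar> < \<tau> / - \<theta>" by auto
      then have "\<bar>q i - qbar \<kappa> i\<bar> * - \<theta> < \<tau>"
        using \<theta> by (subst (asm) pos_less_divide_eq) auto
      then show ?thesis using \<theta> by (simp add: abs_mult mult.commute)
    qed
    moreover have "0 \<le> (\<Sum>i\<in>?V. \<theta> * (q i - qbar \<kappa> i))"
      using sum_deviation_from_qbar[OF assms(1) q] q \<theta>
      by (simp add: simplexC_def mult_nonpos_nonneg flip: sum_distrib_left)
    ultimately have "Ksum \<kappa> (\<lambda>S. x ^ card (?V - S))
        \<le> Ksum \<kappa> (\<lambda>S. \<Prod>i\<in>?V - S. x * exp (\<theta> * (q i - qbar \<kappa> i)))"
      by (intro local_min) auto
    then show "eq_loss \<kappa> n \<epsilon> (qbar \<kappa>) \<le> eq_loss \<kappa> n \<epsilon> q"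
      using eq_loss_near_qbar[OF qbar assms(3), of n] eq_loss_near_qbar[OF q assms(3), of n]
      by (simp add: x_def \<theta>_def)
  qed
qed

end
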